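(* Let $(\Omega,\Sigma,\mu)$ be a measure space and $1<r<p<\infty$. There is a set $\Gamma$ of measures on $\Sigma$ such that $(L^{p,\infty}(\mu),\|\cdot\|_{L^{p,\infty}_r})$ lattice isometrically embeds into $(\bigoplus_{\nu\in\Gamma}(L^{p,\infty}(\nu),\|\cdot\|_{L^{p,\infty}_1}))_\infty$.
   Context: $L^{p,\infty}(\mu)$ is the space of measurable $f$ with $\sup_{t>0}t\,\mu(\{|f|>t\})^{1/p}<\infty$. For $1\le r<p$, $\|f\|_{L^{p,\infty}_r}=\sup_{0<\mu(A)<\infty}\mu(A)^{-\frac1r+\frac1p}(\int_A|f|^r\,d\mu)^{1/r}$; this is an equivalent lattice norm on $L^{p,\infty}(\mu)$. *)

theory Defs
  imports "HOL-Analysis.Analysis"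
begin

definition enn_rpow :: "ennreal \<Rightarrow> real \<Rightarrow> ennreal" where
  "enn_rpow x a = (if x = \<infinity> then \<infinity> else ennreal (enn2real x powr a))"

definition weak_Lp :: "'a measure \<Rightarrow> real \<Rightarrow> ('a \<Rightarrow> real) \<Rightarrow> bool" where
  "weak_Lp M p f \<longleftrightarrow> f \<in> borel_measurable M \<and>
     (SUP t\<in>{0<..}. ennreal t * enn_rpow (emeasure M {x \<in> space M. t < \<bar>f x\<bar>}) (1 / p)) < \<infinity>"

definition wLp_norm :: "'a measure \<Rightarrow> real \<Rightarrow> real \<Rightarrow> ('a \<Rightarrow> real) \<Rightarrow> ennreal" where
  "wLp_norm M p r f =
     (SUP A\<in>{A \<in> sets M. 0 < emeasure M A \<and> emeasure M A < \<infinity>}.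
        ennreal (measure M A powr (1 / p - 1 / r)) *
        enn_rpow (\<integral>\<^sup>+ x\<in>A. ennreal (\<bar>f x\<bar> powr r) \<partial>M) (1 / r))"

end

theory Submission
  imports Defs
begin

text \<open>For a bounded weight h \<ge> 0 supported on a set of finite measure, let
  \<nu>_h = (1 + h^r) \<mu> and T_h f = f h^(r-1) / (\<kappa> (1 + h^r)). For a set B with \<mu>(B) = m and
  \<integral>_B h^r = P, Holder's inequality gives
    \<nu>_h(B)^(1/p-1) \<integral>_B |T_h f| d\<nu>_h \<le> (m + P)^(1/p-1) P^(1-1/r) (\<integral>_B |f|^r)^(1/r) / \<kappa>,
  and weighted AM-GM bounds (m + P)^(1/p-1) P^(1-1/r) by \<kappa> m^(1/p-1/r). Hence every T_h is a
  contraction from L^(p,\<infinity>)_r(\<mu>) into L^(p,\<infinity>)_1(\<nu>_h). Taking h proportional to a truncation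
  of |f| on a set A, scaled so that P/m = \<beta>/\<alpha>, turns both inequalities into equalities on A,
  and monotone convergence shows that the supremum over all weights recovers the norm.
  Each T_h is multiplication by a nonnegative function, hence a lattice homomorphism.\<close>

lemma enn_rpow_one [simp]: "enn_rpow x 1 = x"
  by (cases x) (auto simp: enn_rpow_def)

lemma enn_rpow_top [simp]: "enn_rpow top e = top"
  by (simp add: enn_rpow_def)

lemma enn_rpow_ennreal: "0 \<le> x \<Longrightarrow> enn_rpow (ennreal x) e = ennreal (x powr e)"
  by (simp add: enn_rpow_def)

lemma enn_rpow_mono:
  assumes "x \<le> y" "0 < e"
  shows "enn_rpow x e \<le> enn_rpow y e"
proof (cases "y = \<infinity>")
  case False
  then have "x \<noteq> \<infinity>" and "enn2real x \<le> enn2real y"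
    using assms by (auto simp: top_unique enn2real_mono top.not_eq_extremum)
  then show ?thesis
    using False assms by (auto simp: enn_rpow_def intro!: ennreal_leI powr_mono2)
qed (simp add: enn_rpow_def)

lemma enn_rpow_mult_ennreal:
  assumes "0 < c"
  shows "enn_rpow (ennreal c * x) e = ennreal (c powr e) * enn_rpow x e"
proof (cases "x = \<infinity>")
  case False
  then obtain y where "x = ennreal y" "0 \<le> y" by (cases x) auto
  then show ?thesis
    using assms by (simp add: enn_rpow_def powr_mult flip: ennreal_mult)
qed (use assms in \<open>simp add: ennreal_mult_top\<close>)

definition alpha_exp :: "real \<Rightarrow> real \<Rightarrow> real" where
  "alpha_exp p r = (1/r - 1/p) / (1 - 1/p)"

definition beta_exp :: "real \<Rightarrow> real \<Rightarrow> real" where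
  "beta_exp p r = (1 - 1/r) / (1 - 1/p)"

definition kappa :: "real \<Rightarrow> real \<Rightarrow> real" where
  "kappa p r = (alpha_exp p r powr alpha_exp p r * beta_exp p r powr beta_exp p r) powr (1 - 1/p)"

lemma alpha_beta_exp:
  assumes "1 < r" "r < p"
  shows "0 < alpha_exp p r" "0 < beta_exp p r" "alpha_exp p r + beta_exp p r = 1"
    "alpha_exp p r * (1 - 1/p) = 1/r - 1/p" "beta_exp p r * (1 - 1/p) = 1 - 1/r"
proof -
  have "1/p < 1/r" "1/r < 1" "p \<noteq> 1" using assms by (auto simp: frac_less2)
  then show "0 < alpha_exp p r" "0 < beta_exp p r"
    "alpha_exp p r * (1 - 1/p) = 1/r - 1/p" "beta_exp p r * (1 - 1/p) = 1 - 1/r"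
    unfolding alpha_exp_def beta_exp_def by auto
  show "alpha_exp p r + beta_exp p r = 1"
    using \<open>1/p < 1/r\<close> \<open>1/r < 1\<close> \<open>p \<noteq> 1\<close> unfolding alpha_exp_def beta_exp_def by (simp flip: add_divide_distrib)
qed

lemma kappa_pos: "1 < r \<Longrightarrow> r < p \<Longrightarrow> 0 < kappa p r"
  using alpha_beta_exp[of r p] by (simp add: kappa_def)

text \<open>Weighted AM-GM: \<open>m\<^sup>\<alpha> P\<^sup>\<beta> \<le> \<alpha>\<^sup>\<alpha> \<beta>\<^sup>\<beta> (m + P)\<close>, raised to the power \<open>1 - 1/p\<close>.\<close>

lemma kappa_bound:
  fixes m P :: real
  assumes r: "1 < r" and rp: "r < p" and m: "0 < m" and P: "0 \<le> P"
  shows "(m + P) powr (1/p - 1) * P powr (1 - 1/r) \<le> kappa p r * m powr (1/p - 1/r)"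
proof (cases "P = 0")
  case True
  then show ?thesis using r kappa_pos[OF r rp] by simp
next
  case False
  with P have P: "0 < P" by simp
  define \<alpha> \<beta> where "\<alpha> = alpha_exp p r" and "\<beta> = beta_exp p r"
  have \<alpha>: "0 < \<alpha>" "\<alpha> * (1 - 1/p) = 1/r - 1/p" and \<beta>: "0 < \<beta>" "\<beta> * (1 - 1/p) = 1 - 1/r"
    and \<alpha>\<beta>: "\<alpha> + \<beta> = 1"
    using alpha_beta_exp[OF r rp] by (auto simp: \<alpha>_def \<beta>_def)
  define V where "V = m + P"
  have V: "0 < V" using m P by (simp add: V_def)
  have "(m/\<alpha>) powr \<alpha> * (P/\<beta>) powr \<beta> \<le> \<alpha> * (m/\<alpha>) + \<beta> * (P/\<beta>)"
    by (rule Youngs_inequality_0) (use \<alpha> \<beta> \<alpha>\<beta> m P in auto)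
  then have "m powr \<alpha> * P powr \<beta> \<le> (\<alpha> powr \<alpha> * \<beta> powr \<beta>) * V"
    using \<alpha> \<beta> m P by (simp add: V_def powr_divide divide_le_eq mult.commute)
  then have "(m powr \<alpha> * P powr \<beta>) powr (1 - 1/p) \<le> ((\<alpha> powr \<alpha> * \<beta> powr \<beta>) * V) powr (1 - 1/p)"
    using r rp by (intro powr_mono2) auto
  then have h: "m powr (1/r - 1/p) * P powr (1 - 1/r) \<le> kappa p r * V powr (1 - 1/p)"
    using m P V \<alpha> \<beta> by (simp add: powr_mult powr_powr kappa_def \<alpha>_def \<beta>_def)
  have "V powr (1/p - 1) * P powr (1 - 1/r)
      = m powr (1/p - 1/r) * V powr (1/p - 1) * (m powr (1/r - 1/p) * P powr (1 - 1/r))"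
    using m by (simp add: powr_add[symmetric] mult.assoc)
  also have "\<dots> \<le> m powr (1/p - 1/r) * V powr (1/p - 1) * (kappa p r * V powr (1 - 1/p))"
    using h by (intro mult_left_mono) auto
  also have "\<dots> = kappa p r * m powr (1/p - 1/r)"
    using V by (simp add: powr_add[symmetric] mult_ac)
  finally show ?thesis unfolding V_def .
qed

lemma kappa_bound_eq:
  fixes m :: real
  assumes r: "1 < r" and rp: "r < p" and m: "0 < m"
  defines "P \<equiv> m * beta_exp p r / alpha_exp p r"
  shows "(m + P) powr (1/p - 1) * P powr (1 - 1/r) = kappa p r * m powr (1/p - 1/r)"
proof -
  define \<alpha> \<beta> where "\<alpha> = alpha_exp p r" and "\<beta> = beta_exp p r"
  have \<alpha>: "0 < \<alpha>" "\<alpha> * (1 - 1/p) = 1/r - 1/p" and \<beta>: "0 < \<beta>" "\<beta> * (1 - 1/p) = 1 - 1/r"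
    and \<alpha>\<beta>: "\<alpha> + \<beta> = 1"
    using alpha_beta_exp[OF r rp] by (auto simp: \<alpha>_def \<beta>_def)
  have "m + P = m * (\<alpha> + \<beta>) / \<alpha>"
    using \<alpha> by (simp add: P_def \<alpha>_def[symmetric] \<beta>_def[symmetric] field_simps)
  then have mP: "m + P = m / \<alpha>" using \<alpha>\<beta> by simp
  have \<kappa>: "kappa p r = \<alpha> powr (1/r - 1/p) * \<beta> powr (1 - 1/r)"
    using \<alpha> \<beta> by (simp add: kappa_def \<alpha>_def[symmetric] \<beta>_def[symmetric] powr_mult powr_powr)
  have "ln ((m / \<alpha>) powr (1/p - 1) * (m * \<beta> / \<alpha>) powr (1 - 1/r))
      = ln (\<alpha> powr (1/r - 1/p) * \<beta> powr (1 - 1/r) * m powr (1/p - 1/r))"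
    using m \<alpha> \<beta> by (simp add: ln_mult ln_div ln_powr algebra_simps)
  then show ?thesis
    using m \<alpha> \<beta> unfolding mP \<kappa> by (simp add: P_def \<alpha>_def[symmetric] \<beta>_def[symmetric])
qed

lemma powr_le_powr_inverse:
  fixes x y r :: real
  assumes "0 \<le> x" "0 \<le> y" "0 < r" "x powr (1/r) \<le> y"
  shows "x \<le> y powr r"
proof -
  have "(x powr (1/r)) powr r \<le> y powr r" using assms by (intro powr_mono2) auto
  then show ?thesis using assms by (simp add: powr_powr)
qed

lemma Youngs_inequality_scaled:
  fixes x y a b :: real
  assumes r: "1 < r" and q: "1 < q" and rq: "1/r + 1/q = 1"
    and "0 \<le> x" "0 \<le> y" "0 < a" "0 < b"
  shows "x * y \<le> a * b * (x powr r / (r * a powr r) + y powr q / (q * b powr q))"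
proof -
  have "(x / a) * (y / b) \<le> (x / a) powr r / r + (y / b) powr q / q"
    by (rule Youngs_inequality[OF r q rq]) (use assms in auto)
  also have "\<dots> = x powr r / (r * a powr r) + y powr q / (q * b powr q)"
    using assms by (simp add: powr_divide mult.commute)
  finally show ?thesis
    using assms by (simp add: field_simps)
qed

lemma nn_integral_Holder:
  fixes x y :: "'a \<Rightarrow> real"
  assumes [measurable]: "x \<in> borel_measurable M" "y \<in> borel_measurable M"
    and x0: "\<And>z. 0 \<le> x z" and y0: "\<And>z. 0 \<le> y z"
    and r: "1 < r" and q: "1 < q" and rq: "1/r + 1/q = 1"
    and X: "(\<integral>\<^sup>+ z. ennreal (x z powr r) \<partial>M) = ennreal X" "0 \<le> X"
    and Y: "(\<integral>\<^sup>+ z. ennreal (y z powr q) \<partial>M) = ennreal Y" "0 \<le> Y"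
  shows "(\<integral>\<^sup>+ z. ennreal (x z * y z) \<partial>M) \<le> ennreal (X powr (1/r) * Y powr (1/q))"
proof (cases "X = 0 \<or> Y = 0")
  case True
  have "AE z in M. x z powr r = 0 \<or> y z powr q = 0"
    using True X Y by (auto simp: nn_integral_0_iff_AE)
  then have "AE z in M. ennreal (x z * y z) = 0"
    by eventually_elim (use x0 y0 in auto)
  then have "(\<integral>\<^sup>+ z. ennreal (x z * y z) \<partial>M) = 0"
    by (simp add: nn_integral_cong_AE)
  then show ?thesis by simp
next
  case False
  with X Y have "0 < X" "0 < Y" by auto
  define a b where "a = X powr (1/r)" and "b = Y powr (1/q)"
  have ab: "0 < a" "0 < b" "a powr r = X" "b powr q = Y"
    using \<open>0 < X\<close> \<open>0 < Y\<close> r q by (auto simp: a_def b_def powr_powr)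
  have "(\<integral>\<^sup>+ z. ennreal (x z * y z) \<partial>M)
      \<le> (\<integral>\<^sup>+ z. ennreal (a*b/(r*X)) * ennreal (x z powr r) + ennreal (a*b/(q*Y)) * ennreal (y z powr q) \<partial>M)"
    using Youngs_inequality_scaled[OF r q rq x0 y0 ab(1,2)] ab r q \<open>0 < X\<close> \<open>0 < Y\<close>
    by (intro nn_integral_mono)
      (simp add: field_simps ennreal_mult''[symmetric] ennreal_plus[symmetric] del: ennreal_plus)
  also have "\<dots> = ennreal (a*b/(r*X)) * ennreal X + ennreal (a*b/(q*Y)) * ennreal Y"
    by (simp add: nn_integral_add nn_integral_cmult X Y)
  also have "\<dots> = ennreal (a * b * (1/r + 1/q))"
    using ab r q \<open>0 < X\<close> \<open>0 < Y\<close>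
    by (simp add: field_simps ennreal_mult''[symmetric] ennreal_plus[symmetric] del: ennreal_plus)
  finally show ?thesis
    by (simp add: rq a_def b_def)
qed

definition admissible_weight :: "'a measure \<Rightarrow> ('a \<Rightarrow> real) \<Rightarrow> bool" where
  "admissible_weight M h \<longleftrightarrow> h \<in> borel_measurable M \<and> (\<forall>x. 0 \<le> h x) \<and> (\<exists>K. \<forall>x. h x \<le> K) \<and>
     (\<exists>A\<in>sets M. emeasure M A < \<infinity> \<and> (\<forall>x\<in>space M. x \<notin> A \<longrightarrow> h x = 0))"

definition weight_measure :: "'a measure \<Rightarrow> real \<Rightarrow> ('a \<Rightarrow> real) \<Rightarrow> 'a measure" where
  "weight_measure M r h = density M (\<lambda>x. ennreal (1 + h x powr r))"

definition weight_factor :: "real \<Rightarrow> real \<Rightarrow> ('a \<Rightarrow> real) \<Rightarrow> 'a \<Rightarrow> real" where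
  "weight_factor p r h x = h x powr (r - 1) / (kappa p r * (1 + h x powr r))"

lemma sets_weight_measure [simp, measurable_cong]: "sets (weight_measure M r h) = sets M"
  by (simp add: weight_measure_def)

lemma space_weight_measure [simp]: "space (weight_measure M r h) = space M"
  by (simp add: weight_measure_def)

lemma emeasure_weight_measure:
  assumes [measurable]: "h \<in> borel_measurable M" "B \<in> sets M"
  shows "emeasure (weight_measure M r h) B = emeasure M B + (\<integral>\<^sup>+ x. ennreal (h x powr r) * indicator B x \<partial>M)"
proof -
  have "emeasure (weight_measure M r h) B = (\<integral>\<^sup>+ x. indicator B x + ennreal (h x powr r) * indicator B x \<partial>M)"
    unfolding weight_measure_def
    by (simp add: emeasure_density) (intro nn_integral_cong, simp add: ennreal_plus indicator_def)
  then show ?thesis by (simp add: nn_integral_add)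
qed

lemma AE_weight_measure:
  "h \<in> borel_measurable M \<Longrightarrow> (AE x in M. P x) \<Longrightarrow> (AE x in weight_measure M r h. P x)"
  unfolding weight_measure_def by (subst AE_density) (auto elim: AE_mp)

lemma weight_factor_nonneg: "1 < r \<Longrightarrow> r < p \<Longrightarrow> 0 \<le> weight_factor p r h x"
  using kappa_pos[of r p] by (simp add: weight_factor_def add_pos_nonneg)

lemma nn_integral_powr_indicator_le:
  assumes [measurable]: "h \<in> borel_measurable M" "B \<in> sets M"
    and "\<And>x. 0 \<le> h x" "\<And>x. h x \<le> K" "0 < r"
  shows "(\<integral>\<^sup>+ x. ennreal (h x powr r) * indicator B x \<partial>M) \<le> ennreal (K powr r) * emeasure M B"
proof -
  have "(\<integral>\<^sup>+ x. ennreal (h x powr r) * indicator B x \<partial>M) \<le> (\<integral>\<^sup>+ x. ennreal (K powr r) * indicator B x \<partial>M)"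
    by (intro nn_integral_mono mult_right_mono ennreal_leI powr_mono2) (use assms in auto)
  then show ?thesis by (simp add: nn_integral_cmult_indicator)
qed

lemma admissible_weightE:
  assumes "admissible_weight M h"
  obtains K A where "h \<in> borel_measurable M" "\<And>x. 0 \<le> h x" "\<And>x. h x \<le> K"
    "A \<in> sets M" "emeasure M A < \<infinity>" "\<And>x. x \<in> space M \<Longrightarrow> x \<notin> A \<Longrightarrow> h x = 0"
  using assms unfolding admissible_weight_def by blast

lemma admissible_weight_scale:
  assumes "admissible_weight M h" "0 \<le> s"
  shows "admissible_weight M (\<lambda>x. s * h x)"
proof -
  obtain K A where "h \<in> borel_measurable M" "\<And>x. 0 \<le> h x" "\<And>x. h x \<le> K"
    "A \<in> sets M" "emeasure M A < \<infinity>" "\<And>x. x \<in> space M \<Longrightarrow> x \<notin> A \<Longrightarrow> h x = 0"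
    using assms(1) by (elim admissible_weightE) blast
  then show ?thesis
    unfolding admissible_weight_def using assms(2)
    by (auto intro!: exI[of _ "s * K"] bexI[of _ A] mult_left_mono)
qed

lemma nn_integral_powr_admissible_weight_finite:
  assumes "admissible_weight M h" "0 < r"
  shows "(\<integral>\<^sup>+ x. ennreal (h x powr r) \<partial>M) < \<infinity>"
proof -
  obtain K A where [measurable]: "h \<in> borel_measurable M" "A \<in> sets M"
    and "\<And>x. 0 \<le> h x" "\<And>x. h x \<le> K" "emeasure M A < \<infinity>"
    and hA: "\<And>x. x \<in> space M \<Longrightarrow> x \<notin> A \<Longrightarrow> h x = 0"
    using assms(1) by (elim admissible_weightE) blast
  have "(\<integral>\<^sup>+ x. ennreal (h x powr r) \<partial>M) = (\<integral>\<^sup>+ x\<in>A. ennreal (h x powr r) \<partial>M)"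
    by (intro nn_integral_cong) (use hA assms(2) in \<open>auto simp: indicator_def\<close>)
  also have "\<dots> \<le> ennreal (K powr r) * emeasure M A"
    by (rule nn_integral_powr_indicator_le) (use assms \<open>\<And>x. 0 \<le> h x\<close> \<open>\<And>x. h x \<le> K\<close> in auto)
  also have "\<dots> < \<infinity>"
    using \<open>emeasure M A < \<infinity>\<close> by (simp add: ennreal_mult_less_top)
  finally show ?thesis .
qed

lemma emeasure_weight_measure_pos_finite_iff:
  assumes h: "admissible_weight M h" and r: "0 < r" and B[measurable]: "B \<in> sets M"
  shows "0 < emeasure (weight_measure M r h) B \<and> emeasure (weight_measure M r h) B < \<infinity>
     \<longleftrightarrow> 0 < emeasure M B \<and> emeasure M B < \<infinity>"
proof -
  obtain K where [measurable]: "h \<in> borel_measurable M" and h0: "\<And>x. 0 \<le> h x" and hK: "\<And>x. h x \<le> K"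
    using h by (elim admissible_weightE) blast
  define \<Phi> where "\<Phi> = (\<integral>\<^sup>+ x. ennreal (h x powr r) * indicator B x \<partial>M)"
  have \<nu>: "emeasure (weight_measure M r h) B = emeasure M B + \<Phi>"
    unfolding \<Phi>_def by (rule emeasure_weight_measure) auto
  have \<Phi>: "\<Phi> \<le> ennreal (K powr r) * emeasure M B"
    unfolding \<Phi>_def by (rule nn_integral_powr_indicator_le) (use h0 hK r in auto)
  then have "emeasure M B < \<infinity> \<Longrightarrow> \<Phi> < \<infinity>" and "emeasure M B = 0 \<Longrightarrow> \<Phi> = 0"
    by (auto intro: le_less_trans simp: ennreal_mult_less_top)
  then show ?thesis
    unfolding \<nu> by (auto simp: ennreal_add_less_top less_top[symmetric] zero_less_iff_neq_zero)
qed

lemma weight_measure_eq_imp_density_eq: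
  assumes h1: "admissible_weight M h1" and h2: "admissible_weight M h2"
    and eq: "weight_measure M r h1 = weight_measure M r h2"
  shows "density M (\<lambda>x. ennreal (h1 x powr r)) = density M (\<lambda>x. ennreal (h2 x powr r))"
proof -
  obtain A1 where [measurable]: "h1 \<in> borel_measurable M" "A1 \<in> sets M"
    and A1: "emeasure M A1 < \<infinity>" and hA1: "\<And>x. x \<in> space M \<Longrightarrow> x \<notin> A1 \<Longrightarrow> h1 x = 0"
    using h1 by (elim admissible_weightE) blast
  obtain A2 where [measurable]: "h2 \<in> borel_measurable M" "A2 \<in> sets M"
    and A2: "emeasure M A2 < \<infinity>" and hA2: "\<And>x. x \<in> space M \<Longrightarrow> x \<notin> A2 \<Longrightarrow> h2 x = 0"
    using h2 by (elim admissible_weightE) blast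
  define E where "E = A1 \<union> A2"
  have E[measurable]: "E \<in> sets M" by (simp add: E_def)
  have "emeasure M E \<le> emeasure M A1 + emeasure M A2"
    unfolding E_def by (rule emeasure_subadditive) auto
  then have E_fin: "emeasure M E < \<infinity>"
    using A1 A2 by (simp add: ennreal_add_less_top le_less_trans)
  have restrict: "(\<integral>\<^sup>+ x. ennreal (h x powr r) * indicator (B \<inter> E) x \<partial>M)
      = (\<integral>\<^sup>+ x. ennreal (h x powr r) * indicator B x \<partial>M)"
    if "\<And>x. x \<in> space M \<Longrightarrow> x \<notin> E \<Longrightarrow> h x = 0" for h B
    by (intro nn_integral_cong) (use that in \<open>auto simp: indicator_def\<close>)
  show ?thesis
  proof (rule measure_eqI)
    fix B assume "B \<in> sets (density M (\<lambda>x. ennreal (h1 x powr r)))"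
    then have B[measurable]: "B \<in> sets M" and BE: "B \<inter> E \<in> sets M" by auto
    have "emeasure M (B \<inter> E) \<noteq> \<infinity>"
      using emeasure_mono[of "B \<inter> E" E M] E_fin by (auto simp: top_unique)
    moreover have "emeasure (weight_measure M r h1) (B \<inter> E) = emeasure (weight_measure M r h2) (B \<inter> E)"
      by (simp add: eq)
    ultimately have "(\<integral>\<^sup>+ x. ennreal (h1 x powr r) * indicator (B \<inter> E) x \<partial>M)
        = (\<integral>\<^sup>+ x. ennreal (h2 x powr r) * indicator (B \<inter> E) x \<partial>M)"
      by (simp add: emeasure_weight_measure[OF _ BE] ennreal_add_left_cancel)
    then show "emeasure (density M (\<lambda>x. ennreal (h1 x powr r))) B
        = emeasure (density M (\<lambda>x. ennreal (h2 x powr r))) B"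
      using restrict[of h1 B] restrict[of h2 B] hA1 hA2 by (simp add: emeasure_density E_def)
  qed simp
qed

text \<open>Different weights may give the same measure; they agree almost everywhere, which is
  what makes the embedding independent of the choice of weight.\<close>

lemma weight_measure_eq_imp_AE_eq:
  assumes h1: "admissible_weight M h1" and h2: "admissible_weight M h2" and r: "0 < r"
    and eq: "weight_measure M r h1 = weight_measure M r h2"
  shows "AE x in M. h1 x = h2 x"
proof -
  have [measurable]: "h1 \<in> borel_measurable M" "h2 \<in> borel_measurable M"
    and h10: "\<And>x. 0 \<le> h1 x" and h20: "\<And>x. 0 \<le> h2 x"
    using h1 h2 by (auto simp: admissible_weight_def)
  have "(\<integral>\<^sup>+ x. ennreal (h1 x powr r) \<partial>M) \<noteq> \<infinity>"
    using nn_integral_powr_admissible_weight_finite[OF h1 r] by simp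
  then have "AE x in M. ennreal (h1 x powr r) = ennreal (h2 x powr r)"
    using weight_measure_eq_imp_density_eq[OF h1 h2 eq] by (subst (asm) finite_density_unique) auto
  then show ?thesis
  proof eventually_elim
    case (elim x)
    then have "(h1 x powr r) powr (1/r) = (h2 x powr r) powr (1/r)" by simp
    then show ?case using h10[of x] h20[of x] r by (simp add: powr_powr)
  qed
qed

lemma nn_integral_weight_factor:
  assumes r: "1 < r" and rp: "r < p"
    and [measurable]: "h \<in> borel_measurable M" "g \<in> borel_measurable M" "B \<in> sets M"
    and h0: "\<And>x. 0 \<le> h x"
  shows "(\<integral>\<^sup>+ x\<in>B. ennreal \<bar>g x * weight_factor p r h x\<bar> \<partial>weight_measure M r h)
    = ennreal (1 / kappa p r) * (\<integral>\<^sup>+ x\<in>B. ennreal (\<bar>g x\<bar> * h x powr (r - 1)) \<partial>M)"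
proof -
  have \<kappa>: "0 < kappa p r" by (rule kappa_pos[OF r rp])
  have "(\<integral>\<^sup>+ x\<in>B. ennreal \<bar>g x * weight_factor p r h x\<bar> \<partial>weight_measure M r h)
      = (\<integral>\<^sup>+ x. ennreal (1 + h x powr r) * (ennreal \<bar>g x * weight_factor p r h x\<bar> * indicator B x) \<partial>M)"
    unfolding weight_measure_def by (subst nn_integral_density) (auto simp: weight_factor_def)
  also have "\<dots> = (\<integral>\<^sup>+ x. ennreal (1 / kappa p r) * (ennreal (\<bar>g x\<bar> * h x powr (r - 1)) * indicator B x) \<partial>M)"
  proof (intro nn_integral_cong)
    fix x
    have "0 < 1 + h x powr r" by (simp add: add_pos_nonneg)
    then have "(1 + h x powr r) * \<bar>g x * weight_factor p r h x\<bar> = 1 / kappa p r * (\<bar>g x\<bar> * h x powr (r - 1))"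
      using \<kappa> h0[of x] by (simp add: weight_factor_def abs_mult)
    then show "ennreal (1 + h x powr r) * (ennreal \<bar>g x * weight_factor p r h x\<bar> * indicator B x)
        = ennreal (1 / kappa p r) * (ennreal (\<bar>g x\<bar> * h x powr (r - 1)) * indicator B x)"
      using \<open>0 < 1 + h x powr r\<close> \<kappa>
      by (auto simp: indicator_def ennreal_mult[symmetric] simp del: ennreal_mult ennreal_plus)
  qed
  also have "\<dots> = ennreal (1 / kappa p r) * (\<integral>\<^sup>+ x\<in>B. ennreal (\<bar>g x\<bar> * h x powr (r - 1)) \<partial>M)"
    by (rule nn_integral_cmult) simp
  finally show ?thesis .
qed

lemma set_nn_integral_Holder_powr:
  assumes r: "1 < r" and [measurable]: "g \<in> borel_measurable M" "h \<in> borel_measurable M" "B \<in> sets M"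
    and h0: "\<And>x. 0 \<le> h x"
    and G: "(\<integral>\<^sup>+ x\<in>B. ennreal (\<bar>g x\<bar> powr r) \<partial>M) = ennreal G" "0 \<le> G"
    and P: "(\<integral>\<^sup>+ x\<in>B. ennreal (h x powr r) \<partial>M) = ennreal P" "0 \<le> P"
  shows "(\<integral>\<^sup>+ x\<in>B. ennreal (\<bar>g x\<bar> * h x powr (r - 1)) \<partial>M) \<le> ennreal (G powr (1/r) * P powr (1 - 1/r))"
proof -
  define q where "q = r / (r - 1)"
  have q: "1 < q" "1/r + 1/q = 1" "1/q = 1 - 1/r" using r by (auto simp: q_def field_simps)
  have "(\<integral>\<^sup>+ x. ennreal ((indicator B x * \<bar>g x\<bar>) * (indicator B x * h x powr (r - 1))) \<partial>M)
      \<le> ennreal (G powr (1/r) * P powr (1/q))"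
  proof (rule nn_integral_Holder[OF _ _ _ _ r q(1,2)])
    show "(\<integral>\<^sup>+ x. ennreal ((indicator B x * \<bar>g x\<bar>) powr r) \<partial>M) = ennreal G"
      unfolding G(1)[symmetric] by (intro nn_integral_cong) (use r in \<open>auto simp: indicator_def\<close>)
    have "(h x powr (r - 1)) powr q = h x powr r" for x
      using r by (simp add: powr_powr q_def)
    then show "(\<integral>\<^sup>+ x. ennreal ((indicator B x * h x powr (r - 1)) powr q) \<partial>M) = ennreal P"
      unfolding P(1)[symmetric] by (intro nn_integral_cong) (use q in \<open>auto simp: indicator_def\<close>)
  qed (use h0 G P in auto)
  moreover have "(\<integral>\<^sup>+ x\<in>B. ennreal (\<bar>g x\<bar> * h x powr (r - 1)) \<partial>M)
      = (\<integral>\<^sup>+ x. ennreal ((indicator B x * \<bar>g x\<bar>) * (indicator B x * h x powr (r - 1))) \<partial>M)"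
    by (intro nn_integral_cong) (auto simp: indicator_def)
  ultimately show ?thesis
    by (simp add: q(3))
qed

lemma weight_measure_term_le_wLp_norm:
  assumes r: "1 < r" and rp: "r < p" and h: "admissible_weight M h"
    and [measurable]: "g \<in> borel_measurable M" "B \<in> sets M"
    and B: "0 < emeasure M B" "emeasure M B < \<infinity>"
  shows "ennreal (measure (weight_measure M r h) B powr (1/p - 1)) *
      (\<integral>\<^sup>+ x\<in>B. ennreal \<bar>g x * weight_factor p r h x\<bar> \<partial>weight_measure M r h) \<le> wLp_norm M p r g"
proof -
  have [measurable]: "h \<in> borel_measurable M" and h0: "\<And>x. 0 \<le> h x"
    using h by (auto simp: admissible_weight_def)
  have \<kappa>: "0 < kappa p r" by (rule kappa_pos[OF r rp])
  define m where "m = measure M B"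
  have m: "emeasure M B = ennreal m" "0 < m"
    using B emeasure_eq_ennreal_measure[of M B] by (auto simp: m_def less_top)
  have "(\<integral>\<^sup>+ x\<in>B. ennreal (h x powr r) \<partial>M) \<le> (\<integral>\<^sup>+ x. ennreal (h x powr r) \<partial>M)"
    by (intro nn_integral_mono) (simp add: indicator_def)
  also have "\<dots> < \<infinity>"
    using nn_integral_powr_admissible_weight_finite[OF h] r by simp
  finally obtain P where P: "(\<integral>\<^sup>+ x\<in>B. ennreal (h x powr r) \<partial>M) = ennreal P" "0 \<le> P"
    by (cases "\<integral>\<^sup>+ x\<in>B. ennreal (h x powr r) \<partial>M") auto
  have \<nu>B: "measure (weight_measure M r h) B = m + P"
    using emeasure_weight_measure[of h M B r] m P by (simp add: measure_def flip: ennreal_plus)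
  define G where "G = (\<integral>\<^sup>+ x\<in>B. ennreal (\<bar>g x\<bar> powr r) \<partial>M)"
  have G_le: "ennreal (m powr (1/p - 1/r)) * enn_rpow G (1/r) \<le> wLp_norm M p r g"
    unfolding wLp_norm_def G_def m_def by (rule SUP_upper2[of B]) (use B in auto)
  show ?thesis
  proof (cases "G = \<infinity>")
    case True
    with G_le m have "wLp_norm M p r g = \<infinity>" by (simp add: ennreal_mult_top top_unique)
    then show ?thesis by simp
  next
    case False
    then obtain Gr where Gr: "G = ennreal Gr" "0 \<le> Gr" by (cases G) auto
    have "ennreal (measure (weight_measure M r h) B powr (1/p - 1)) *
        (\<integral>\<^sup>+ x\<in>B. ennreal \<bar>g x * weight_factor p r h x\<bar> \<partial>weight_measure M r h)
      = ennreal ((m + P) powr (1/p - 1)) * (ennreal (1 / kappa p r) *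
          (\<integral>\<^sup>+ x\<in>B. ennreal (\<bar>g x\<bar> * h x powr (r - 1)) \<partial>M))"
      by (simp add: \<nu>B nn_integral_weight_factor[OF r rp] h0)
    also have "\<dots> \<le> ennreal ((m + P) powr (1/p - 1)) * (ennreal (1 / kappa p r) *
          ennreal (Gr powr (1/r) * P powr (1 - 1/r)))"
      using set_nn_integral_Holder_powr[OF r _ _ _ h0 Gr[unfolded G_def] P]
      by (intro mult_left_mono) auto
    also have "\<dots> = ennreal (Gr powr (1/r) * ((m + P) powr (1/p - 1) * P powr (1 - 1/r)) / kappa p r)"
      using \<kappa> by (simp add: mult_ac flip: ennreal_mult)
    also have "\<dots> \<le> ennreal (Gr powr (1/r) * (kappa p r * m powr (1/p - 1/r)) / kappa p r)"
      using kappa_bound[OF r rp m(2) P(2)] \<kappa>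
      by (intro ennreal_leI divide_right_mono mult_left_mono) auto
    also have "\<dots> = ennreal (m powr (1/p - 1/r)) * enn_rpow G (1/r)"
      using \<kappa> Gr by (simp add: enn_rpow_ennreal mult_ac flip: ennreal_mult)
    finally show ?thesis using G_le by (rule order_trans)
  qed
qed

lemma wLp_norm_weight_measure_le:
  assumes "1 < r" "r < p" "admissible_weight M h" "g \<in> borel_measurable M"
  shows "wLp_norm (weight_measure M r h) p 1 (\<lambda>x. g x * weight_factor p r h x) \<le> wLp_norm M p r g"
  unfolding wLp_norm_def[of "weight_measure M r h"]
proof (rule SUP_least)
  fix B assume "B \<in> {A \<in> sets (weight_measure M r h).
    0 < emeasure (weight_measure M r h) A \<and> emeasure (weight_measure M r h) A < \<infinity>}"
  with assms have "B \<in> sets M" "0 < emeasure M B" "emeasure M B < \<infinity>"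
    using emeasure_weight_measure_pos_finite_iff[of M h r B] by auto
  from weight_measure_term_le_wLp_norm[OF assms this]
  show "ennreal (measure (weight_measure M r h) B powr (1 / p - 1 / 1)) *
      enn_rpow (\<integral>\<^sup>+ x\<in>B. ennreal (\<bar>g x * weight_factor p r h x\<bar> powr 1) \<partial>weight_measure M r h) (1 / 1)
    \<le> wLp_norm M p r g"
    by simp
qed

lemma weight_factor_le:
  assumes "1 < r" "r < p" "\<And>x. 0 \<le> h x" "\<And>x. h x \<le> K"
  shows "weight_factor p r h x \<le> K powr (r - 1) / kappa p r"
proof -
  have "h x powr (r - 1) \<le> K powr (r - 1)" using assms by (intro powr_mono2) auto
  moreover have "kappa p r \<le> kappa p r * (1 + h x powr r)" using kappa_pos[OF assms(1,2)] by simp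
  ultimately show ?thesis
    using kappa_pos[OF assms(1,2)] by (auto simp: weight_factor_def intro!: frac_le add_pos_nonneg)
qed

lemma emeasure_weight_measure_level_set_le:
  assumes r: "1 < r" and rp: "r < p" and [measurable]: "h \<in> borel_measurable M" "g \<in> borel_measurable M"
    and h0: "\<And>x. 0 \<le> h x" and hK: "\<And>x. h x \<le> K" and K: "0 < K" and t: "0 < t"
  shows "emeasure (weight_measure M r h) {x \<in> space M. t < \<bar>g x * weight_factor p r h x\<bar>}
    \<le> ennreal (1 + K powr r) * emeasure M {x \<in> space M. t / (K powr (r - 1) / kappa p r) < \<bar>g x\<bar>}"
proof -
  define L where "L = K powr (r - 1) / kappa p r"
  have L: "0 < L" using K kappa_pos[OF r rp] by (simp add: L_def)
  define D where "D = {x \<in> space M. t / L < \<bar>g x\<bar>}"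
  have D[measurable]: "D \<in> sets M" unfolding D_def by measurable
  have "{x \<in> space M. t < \<bar>g x * weight_factor p r h x\<bar>} \<subseteq> D"
  proof
    fix x assume "x \<in> {x \<in> space M. t < \<bar>g x * weight_factor p r h x\<bar>}"
    moreover have "\<bar>g x * weight_factor p r h x\<bar> \<le> \<bar>g x\<bar> * L"
      using weight_factor_le[of r p h K x, OF r rp h0 hK] weight_factor_nonneg[OF r rp, of h x]
      unfolding L_def abs_mult by (metis abs_ge_zero abs_of_nonneg mult_left_mono)
    ultimately show "x \<in> D" using L by (auto simp: D_def pos_divide_less_eq)
  qed
  then have "emeasure (weight_measure M r h) {x \<in> space M. t < \<bar>g x * weight_factor p r h x\<bar>}
      \<le> emeasure (weight_measure M r h) D"
    using D by (intro emeasure_mono) auto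
  also have "\<dots> = emeasure M D + (\<integral>\<^sup>+ x\<in>D. ennreal (h x powr r) \<partial>M)"
    by (rule emeasure_weight_measure) auto
  also have "\<dots> \<le> emeasure M D + ennreal (K powr r) * emeasure M D"
    by (intro add_left_mono nn_integral_powr_indicator_le) (use h0 hK r in auto)
  also have "\<dots> = ennreal (1 + K powr r) * emeasure M D"
    by (simp add: ennreal_plus distrib_right)
  finally show ?thesis by (simp add: D_def L_def)
qed

lemma weak_Lp_weight_measure:
  assumes r: "1 < r" and rp: "r < p" and h: "admissible_weight M h" and g: "weak_Lp M p g"
  shows "weak_Lp (weight_measure M r h) p (\<lambda>x. g x * weight_factor p r h x)"
proof -
  obtain K0 where hm[measurable]: "h \<in> borel_measurable M" and h0: "\<And>x. 0 \<le> h x"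
    and hK0: "\<And>x. h x \<le> K0"
    using h by (elim admissible_weightE) blast
  define K where "K = max K0 1"
  have hK: "h x \<le> K" for x using hK0[of x] by (simp add: K_def)
  define L C where "L = K powr (r - 1) / kappa p r" and "C = 1 + K powr r"
  have K: "0 < K" and L: "0 < L" and C: "0 < C"
    using kappa_pos[OF r rp] by (auto simp: L_def C_def K_def add_pos_nonneg)
  have gm[measurable]: "g \<in> borel_measurable M" using g by (simp add: weak_Lp_def)
  define S where "S = (SUP t\<in>{0<..}. ennreal t * enn_rpow (emeasure M {x \<in> space M. t < \<bar>g x\<bar>}) (1/p))"
  have "ennreal t * enn_rpow (emeasure (weight_measure M r h) {x \<in> space M. t < \<bar>g x * weight_factor p r h x\<bar>}) (1/p)
      \<le> ennreal (L * C powr (1/p)) * S" if t: "0 < t" for t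
  proof -
    define D where "D = {x \<in> space M. t / L < \<bar>g x\<bar>}"
    have "ennreal t * enn_rpow (emeasure (weight_measure M r h) {x \<in> space M. t < \<bar>g x * weight_factor p r h x\<bar>}) (1/p)
        \<le> ennreal t * enn_rpow (ennreal C * emeasure M D) (1/p)"
      using emeasure_weight_measure_level_set_le[OF r rp hm gm h0 hK K t] r rp
      by (intro mult_left_mono enn_rpow_mono) (auto simp: C_def D_def L_def)
    also have "\<dots> = ennreal (t * C powr (1/p)) * enn_rpow (emeasure M D) (1/p)"
      using C t by (simp add: enn_rpow_mult_ennreal mult.assoc ennreal_mult)
    also have "t * C powr (1/p) = (L * C powr (1/p)) * (t / L)"
      using L by simp
    also have "ennreal (L * C powr (1/p) * (t / L)) * enn_rpow (emeasure M D) (1/p)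
        = ennreal (L * C powr (1/p)) * (ennreal (t / L) * enn_rpow (emeasure M D) (1/p))"
      using C L t by (subst ennreal_mult) (auto simp: mult.assoc)
    also have "\<dots> \<le> ennreal (L * C powr (1/p)) * S"
      unfolding S_def D_def using t L by (intro mult_left_mono SUP_upper2[of "t / L"]) auto
    finally show ?thesis .
  qed
  then have "(SUP t\<in>{0<..}. ennreal t * enn_rpow (emeasure (weight_measure M r h)
      {x \<in> space M. t < \<bar>g x * weight_factor p r h x\<bar>}) (1/p)) \<le> ennreal (L * C powr (1/p)) * S"
    by (intro SUP_least) auto
  also have "\<dots> < \<infinity>"
    using g by (simp add: weak_Lp_def S_def ennreal_mult_less_top)
  finally show ?thesis
    by (simp add: weak_Lp_def weight_factor_def)
qed

lemma emeasure_weight_measure_scale: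
  assumes [measurable]: "g \<in> borel_measurable M" "A \<in> sets M" and s: "0 \<le> s"
    and g0: "\<And>x. 0 \<le> g x" and gA: "\<And>x. x \<notin> A \<Longrightarrow> g x = 0"
    and F: "(\<integral>\<^sup>+ x. ennreal (g x powr r) \<partial>M) = ennreal F"
  shows "emeasure (weight_measure M r (\<lambda>x. s * g x)) A = emeasure M A + ennreal (s powr r * F)"
proof -
  have "(\<integral>\<^sup>+ x\<in>A. ennreal ((s * g x) powr r) \<partial>M) = (\<integral>\<^sup>+ x. ennreal (s powr r) * ennreal (g x powr r) \<partial>M)"
    using s g0 gA by (intro nn_integral_cong) (auto simp: powr_mult indicator_def simp flip: ennreal_mult)
  also have "\<dots> = ennreal (s powr r * F)"
    using F by (simp add: nn_integral_cmult ennreal_mult')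
  finally show ?thesis
    by (simp add: emeasure_weight_measure)
qed

lemma wLp_norm_weight_measure_scale_ge:
  assumes r: "1 < r" and rp: "r < p" and s: "0 < s"
    and [measurable]: "f \<in> borel_measurable M" "g \<in> borel_measurable M" "A \<in> sets M"
    and a: "emeasure M A = ennreal a" "0 < a"
    and g0: "\<And>x. 0 \<le> g x" and g_le: "\<And>x. g x \<le> indicator A x * \<bar>f x\<bar>"
    and F: "(\<integral>\<^sup>+ x. ennreal (g x powr r) \<partial>M) = ennreal F" "0 \<le> F"
  shows "ennreal ((a + s powr r * F) powr (1/p - 1)) * ennreal (s powr (r - 1) * F / kappa p r)
    \<le> wLp_norm (weight_measure M r (\<lambda>x. s * g x)) p 1 (\<lambda>x. f x * weight_factor p r (\<lambda>x. s * g x) x)"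
proof -
  define h where "h = (\<lambda>x. s * g x)"
  have [measurable]: "h \<in> borel_measurable M" unfolding h_def by measurable
  have h0: "0 \<le> h x" for x using s g0[of x] by (simp add: h_def)
  have gA: "g x = 0" if "x \<notin> A" for x using g0[of x] g_le[of x] that by simp
  have \<kappa>: "0 < kappa p r" by (rule kappa_pos[OF r rp])
  have \<nu>A: "emeasure (weight_measure M r h) A = ennreal (a + s powr r * F)"
    using emeasure_weight_measure_scale[of g M A s, OF _ _ _ g0 gA F(1)] s a F
    by (simp add: h_def flip: ennreal_plus)
  have "ennreal (s powr (r - 1) * F) = (\<integral>\<^sup>+ x. ennreal (s powr (r - 1)) * ennreal (g x powr r) \<partial>M)"
    using F by (simp add: nn_integral_cmult ennreal_mult)
  also have "\<dots> \<le> (\<integral>\<^sup>+ x\<in>A. ennreal (\<bar>f x\<bar> * h x powr (r - 1)) \<partial>M)"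
  proof (intro nn_integral_mono)
    fix x
    have "s powr (r - 1) * g x powr r = g x * h x powr (r - 1)"
      using s g0[of x] r by (simp add: h_def powr_mult powr_mult_base)
    also have "\<dots> \<le> indicator A x * \<bar>f x\<bar> * h x powr (r - 1)"
      using g_le[of x] by (simp add: mult_right_mono)
    finally show "ennreal (s powr (r - 1)) * ennreal (g x powr r) \<le> ennreal (\<bar>f x\<bar> * h x powr (r - 1)) * indicator A x"
      using gA[of x] by (auto simp: indicator_def simp flip: ennreal_mult intro: ennreal_leI)
  qed
  finally have "ennreal (s powr (r - 1) * F) \<le> (\<integral>\<^sup>+ x\<in>A. ennreal (\<bar>f x\<bar> * h x powr (r - 1)) \<partial>M)" .
  then have "ennreal (1 / kappa p r) * ennreal (s powr (r - 1) * F)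
      \<le> (\<integral>\<^sup>+ x\<in>A. ennreal \<bar>f x * weight_factor p r h x\<bar> \<partial>weight_measure M r h)"
    unfolding nn_integral_weight_factor[OF r rp \<open>h \<in> borel_measurable M\<close>
        \<open>f \<in> borel_measurable M\<close> \<open>A \<in> sets M\<close> h0] by (intro mult_left_mono) auto
  then have "ennreal (s powr (r - 1) * F / kappa p r)
      \<le> (\<integral>\<^sup>+ x\<in>A. ennreal \<bar>f x * weight_factor p r h x\<bar> \<partial>weight_measure M r h)"
    using \<kappa> F s by (simp flip: ennreal_mult)
  moreover have "measure (weight_measure M r h) A = a + s powr r * F"
    using \<nu>A a F s by (simp add: measure_def flip: ennreal_plus)
  ultimately have "ennreal ((a + s powr r * F) powr (1/p - 1)) * ennreal (s powr (r - 1) * F / kappa p r)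
      \<le> ennreal (measure (weight_measure M r h) A powr (1/p - 1)) *
         enn_rpow (\<integral>\<^sup>+ x\<in>A. ennreal (\<bar>f x * weight_factor p r h x\<bar> powr 1) \<partial>weight_measure M r h) (1 / 1)"
    by (simp add: mult_left_mono)
  also have "\<dots> \<le> wLp_norm (weight_measure M r h) p 1 (\<lambda>x. f x * weight_factor p r h x)"
    unfolding wLp_norm_def using \<nu>A a F s
    by (intro SUP_upper2[of A]) (auto simp: add_pos_nonneg simp flip: ennreal_plus)
  finally show ?thesis by (simp add: h_def)
qed

lemma admissible_weight_zero: "admissible_weight M (\<lambda>_. 0)"
  by (auto simp: admissible_weight_def intro: bexI[of _ "{}"])

lemma admissible_weight_truncation:
  assumes [measurable]: "f \<in> borel_measurable M" "A \<in> sets M" and "emeasure M A < \<infinity>" "0 \<le> c"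
  shows "admissible_weight M (\<lambda>x. indicator A x * min \<bar>f x\<bar> c)"
  unfolding admissible_weight_def using assms
  by (auto intro!: exI[of _ c] bexI[of _ A] simp: indicator_def)

lemma exists_admissible_weight_wLp_norm_ge:
  assumes r: "1 < r" and rp: "r < p"
    and [measurable]: "f \<in> borel_measurable M" "A \<in> sets M"
    and a: "emeasure M A = ennreal a" "0 < a"
    and g: "admissible_weight M g" and g_le: "\<And>x. g x \<le> indicator A x * \<bar>f x\<bar>"
  obtains h where "admissible_weight M h"
    "ennreal (a powr (1/p - 1/r)) * enn_rpow (\<integral>\<^sup>+ x. ennreal (g x powr r) \<partial>M) (1/r)
      \<le> wLp_norm (weight_measure M r h) p 1 (\<lambda>x. f x * weight_factor p r h x)"
proof -
  have [measurable]: "g \<in> borel_measurable M" and g0: "\<And>x. 0 \<le> g x"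
    using g by (auto simp: admissible_weight_def)
  have "(\<integral>\<^sup>+ x. ennreal (g x powr r) \<partial>M) < \<infinity>"
    using nn_integral_powr_admissible_weight_finite[OF g] r by simp
  then obtain F where F: "(\<integral>\<^sup>+ x. ennreal (g x powr r) \<partial>M) = ennreal F" "0 \<le> F"
    by (cases "\<integral>\<^sup>+ x. ennreal (g x powr r) \<partial>M") auto
  show ?thesis
  proof (cases "F = 0")
    case True
    then show ?thesis
      using that[OF admissible_weight_zero] r by (simp add: F enn_rpow_def)
  next
    case False
    with F have F: "(\<integral>\<^sup>+ x. ennreal (g x powr r) \<partial>M) = ennreal F" "0 < F" by auto
    define P where "P = a * beta_exp p r / alpha_exp p r"
    define s where "s = (P / F) powr (1/r)"
    have P: "0 < P" using a alpha_beta_exp[OF r rp] by (simp add: P_def)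
    have s: "0 < s" using P F by (simp add: s_def)
    have sP: "s powr r * F = P"
      using P F r by (simp add: s_def powr_powr)
    have "ln (s powr (r - 1) * F) = ln (P powr (1 - 1/r) * F powr (1/r))"
      using P F s r by (simp add: s_def ln_mult ln_div field_simps)
    then have sP': "s powr (r - 1) * F = P powr (1 - 1/r) * F powr (1/r)"
      using P F s by simp
    have "ennreal (a powr (1/p - 1/r)) * enn_rpow (\<integral>\<^sup>+ x. ennreal (g x powr r) \<partial>M) (1/r)
        = ennreal ((a + P) powr (1/p - 1)) * ennreal (P powr (1 - 1/r) * F powr (1/r) / kappa p r)"
      using kappa_bound_eq[OF r rp a(2)] kappa_pos[OF r rp] F
      by (simp add: P_def enn_rpow_ennreal field_simps flip: ennreal_mult)
    also have "\<dots> \<le> wLp_norm (weight_measure M r (\<lambda>x. s * g x)) p 1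
        (\<lambda>x. f x * weight_factor p r (\<lambda>x. s * g x) x)"
      using wLp_norm_weight_measure_scale_ge[OF r rp s _ _ _ a g0 g_le F(1)] F sP sP' by simp
    finally show ?thesis
      using that admissible_weight_scale[OF g, of s] s by simp
  qed
qed

lemma set_term_le_of_truncations:
  assumes [measurable]: "f \<in> borel_measurable M" "A \<in> sets M" and r: "0 < r" and c: "0 < c"
    and bound: "\<And>k::nat. ennreal c *
      enn_rpow (\<integral>\<^sup>+ x. ennreal ((indicator A x * min \<bar>f x\<bar> (real k)) powr r) \<partial>M) (1/r) \<le> S"
  shows "ennreal c * enn_rpow (\<integral>\<^sup>+ x\<in>A. ennreal (\<bar>f x\<bar> powr r) \<partial>M) (1/r) \<le> S"
proof (cases "S = \<infinity>")
  case False
  then obtain Sr where S: "S = ennreal Sr" "0 \<le> Sr" by (cases S) auto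
  define trunc where "trunc = (\<lambda>(k::nat) x. ennreal ((indicator A x * min \<bar>f x\<bar> (real k)) powr r))"
  have trunc_le: "(\<integral>\<^sup>+ x. trunc k x \<partial>M) \<le> ennreal ((Sr / c) powr r)" for k
  proof -
    have "(\<integral>\<^sup>+ x. trunc k x \<partial>M) \<noteq> \<infinity>"
      using bound[of k] c S by (auto simp: trunc_def enn_rpow_def ennreal_mult_top top_unique)
    then obtain F where F: "(\<integral>\<^sup>+ x. trunc k x \<partial>M) = ennreal F" "0 \<le> F"
      by (cases "\<integral>\<^sup>+ x. trunc k x \<partial>M") auto
    with bound[of k] c S have "c * F powr (1/r) \<le> Sr"
      by (simp add: trunc_def enn_rpow_ennreal flip: ennreal_mult)
    then have "F powr (1/r) \<le> Sr / c" using c by (simp add: field_simps)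
    then show ?thesis
      using F S c r by (simp add: ennreal_leI powr_le_powr_inverse)
  qed
  have "incseq trunc"
    by (intro incseq_SucI le_funI)
      (use r in \<open>auto simp: trunc_def indicator_def intro!: ennreal_leI powr_mono2\<close>)
  have "ennreal (\<bar>f x\<bar> powr r) * indicator A x \<le> (SUP k. trunc k x)" for x
  proof -
    obtain k :: nat where "\<bar>f x\<bar> \<le> real k" using real_arch_simple by blast
    then have "ennreal (\<bar>f x\<bar> powr r) * indicator A x = trunc k x"
      by (auto simp: trunc_def indicator_def min_def)
    then show ?thesis by (metis SUP_upper UNIV_I)
  qed
  then have "(\<integral>\<^sup>+ x\<in>A. ennreal (\<bar>f x\<bar> powr r) \<partial>M) \<le> (\<integral>\<^sup>+ x. (SUP k. trunc k x) \<partial>M)"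
    by (intro nn_integral_mono)
  also have "\<dots> = (SUP k. \<integral>\<^sup>+ x. trunc k x \<partial>M)"
    by (rule nn_integral_monotone_convergence_SUP[OF \<open>incseq trunc\<close>]) (simp add: trunc_def)
  also have "\<dots> \<le> ennreal ((Sr / c) powr r)"
    by (intro SUP_least trunc_le)
  finally have "enn_rpow (\<integral>\<^sup>+ x\<in>A. ennreal (\<bar>f x\<bar> powr r) \<partial>M) (1/r) \<le> ennreal (Sr / c)"
    using enn_rpow_mono[of _ _ "1/r"] r S c by (fastforce simp: enn_rpow_ennreal powr_powr)
  then have "ennreal c * enn_rpow (\<integral>\<^sup>+ x\<in>A. ennreal (\<bar>f x\<bar> powr r) \<partial>M) (1/r) \<le> ennreal c * ennreal (Sr / c)"
    by (rule mult_left_mono) simp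
  then show ?thesis
    using c S by (simp flip: ennreal_mult)
qed simp

lemma wLp_norm_cong_AE:
  assumes "AE x in M. f x = g x"
  shows "wLp_norm M p r f = wLp_norm M p r g"
proof -
  have "(\<integral>\<^sup>+ x\<in>A. ennreal (\<bar>f x\<bar> powr r) \<partial>M) = (\<integral>\<^sup>+ x\<in>A. ennreal (\<bar>g x\<bar> powr r) \<partial>M)" for A
    using assms by (intro nn_integral_cong_AE) auto
  then show ?thesis by (simp add: wLp_norm_def)
qed

definition weight_measures :: "'a measure \<Rightarrow> real \<Rightarrow> 'a measure set" where
  "weight_measures M r = weight_measure M r ` Collect (admissible_weight M)"

definition weight_embedding :: "'a measure \<Rightarrow> real \<Rightarrow> real \<Rightarrow> ('a \<Rightarrow> real) \<Rightarrow> 'a measure \<Rightarrow> 'a \<Rightarrow> real" where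
  "weight_embedding M p r f \<nu> x =
     f x * weight_factor p r (SOME h. admissible_weight M h \<and> \<nu> = weight_measure M r h) x"

lemma weight_measuresE:
  assumes "\<nu> \<in> weight_measures M r"
  obtains h where "admissible_weight M h" "\<nu> = weight_measure M r h"
    "\<And>f. weight_embedding M p r f \<nu> = (\<lambda>x. f x * weight_factor p r h x)"
proof -
  let ?h = "SOME h. admissible_weight M h \<and> \<nu> = weight_measure M r h"
  have "admissible_weight M ?h \<and> \<nu> = weight_measure M r ?h"
    using assms by (intro someI_ex[of "\<lambda>h. admissible_weight M h \<and> \<nu> = weight_measure M r h"])
      (auto simp: weight_measures_def)
  then show ?thesis
    using that[of ?h] by (auto simp: weight_embedding_def fun_eq_iff)
qed

lemma AE_weight_embedding_weight_measure:
  assumes h: "admissible_weight M h" and r: "0 < r"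
  shows "AE x in weight_measure M r h.
    weight_embedding M p r f (weight_measure M r h) x = f x * weight_factor p r h x"
proof -
  have "weight_measure M r h \<in> weight_measures M r"
    using h by (auto simp: weight_measures_def)
  then obtain h' where h': "admissible_weight M h'" "weight_measure M r h = weight_measure M r h'"
    and T: "\<And>f. weight_embedding M p r f (weight_measure M r h) = (\<lambda>x. f x * weight_factor p r h' x)"
    by (rule weight_measuresE[where p = p]) blast
  have "AE x in M. h' x = h x"
    using weight_measure_eq_imp_AE_eq[OF h' (1) h r] h'(2) by simp
  then have "AE x in weight_measure M r h. h' x = h x"
    using h by (intro AE_weight_measure) (auto simp: admissible_weight_def)
  then show ?thesis
    by eventually_elim (simp add: T weight_factor_def)
qed

lemma wLp_norm_eq_SUP_weight_embedding:
  assumes r: "1 < r" and rp: "r < p" and [measurable]: "f \<in> borel_measurable M"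
  shows "wLp_norm M p r f = (SUP \<nu>\<in>weight_measures M r. wLp_norm \<nu> p 1 (weight_embedding M p r f \<nu>))"
    (is "_ = ?S")
proof (rule antisym)
  show "wLp_norm M p r f \<le> ?S"
    unfolding wLp_norm_def[of M p r f]
  proof (rule SUP_least)
    fix A assume "A \<in> {A \<in> sets M. 0 < emeasure M A \<and> emeasure M A < \<infinity>}"
    then have [measurable]: "A \<in> sets M" and a: "emeasure M A = ennreal (measure M A)" "0 < measure M A"
      using emeasure_eq_ennreal_measure[of M A] by (auto simp: less_top)
    show "ennreal (measure M A powr (1/p - 1/r)) * enn_rpow (\<integral>\<^sup>+ x\<in>A. ennreal (\<bar>f x\<bar> powr r) \<partial>M) (1/r) \<le> ?S"
    proof (rule set_term_le_of_truncations)
      fix k :: nat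
      obtain h where h: "admissible_weight M h"
        and le: "ennreal (measure M A powr (1/p - 1/r)) *
          enn_rpow (\<integral>\<^sup>+ x. ennreal ((indicator A x * min \<bar>f x\<bar> (real k)) powr r) \<partial>M) (1/r)
          \<le> wLp_norm (weight_measure M r h) p 1 (\<lambda>x. f x * weight_factor p r h x)"
        by (rule exists_admissible_weight_wLp_norm_ge[where f = f,
              OF r rp _ _ a admissible_weight_truncation[of f M A "real k"]])
          (auto simp: indicator_def a)
      note le
      also have "\<dots> = wLp_norm (weight_measure M r h) p 1 (weight_embedding M p r f (weight_measure M r h))"
        using r by (intro wLp_norm_cong_AE[symmetric] AE_weight_embedding_weight_measure[OF h]) simp
      also have "\<dots> \<le> ?S"
        using h by (intro SUP_upper) (auto simp: weight_measures_def)
      finally show "ennreal (measure M A powr (1/p - 1/r)) *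
          enn_rpow (\<integral>\<^sup>+ x. ennreal ((indicator A x * min \<bar>f x\<bar> (real k)) powr r) \<partial>M) (1/r) \<le> ?S" .
    qed (use r a in auto)
  qed
  show "?S \<le> wLp_norm M p r f"
  proof (rule SUP_least)
    fix \<nu> assume "\<nu> \<in> weight_measures M r"
    then show "wLp_norm \<nu> p 1 (weight_embedding M p r f \<nu>) \<le> wLp_norm M p r f"
      by (elim weight_measuresE[where p = p]) (simp add: wLp_norm_weight_measure_le[OF r rp])
  qed
qed

theorem mainTheorem13:
  fixes M :: "'a measure" and p r :: real
  assumes "1 < r" and "r < p"
  shows "\<exists>(\<Gamma> :: 'a measure set) (T :: ('a \<Rightarrow> real) \<Rightarrow> 'a measure \<Rightarrow> 'a \<Rightarrow> real).
    (\<forall>\<nu>\<in>\<Gamma>. sets \<nu> = sets M) \<and>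
    (\<forall>f. weak_Lp M p f \<longrightarrow> (\<forall>\<nu>\<in>\<Gamma>. weak_Lp \<nu> p (T f \<nu>))) \<and>
    (\<forall>f g. weak_Lp M p f \<longrightarrow> weak_Lp M p g \<longrightarrow> (AE x in M. f x = g x) \<longrightarrow>
        (\<forall>\<nu>\<in>\<Gamma>. AE x in \<nu>. T f \<nu> x = T g \<nu> x)) \<and>
    (\<forall>f g a b. weak_Lp M p f \<longrightarrow> weak_Lp M p g \<longrightarrow>
        (\<forall>\<nu>\<in>\<Gamma>. AE x in \<nu>. T (\<lambda>y. a * f y + b * g y) \<nu> x = a * T f \<nu> x + b * T g \<nu> x)) \<and>
    (\<forall>f. weak_Lp M p f \<longrightarrow>
        (\<forall>\<nu>\<in>\<Gamma>. AE x in \<nu>. T (\<lambda>y. \<bar>f y\<bar>) \<nu> x = \<bar>T f \<nu> x\<bar>)) \<and>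
    (\<forall>f. weak_Lp M p f \<longrightarrow>
        wLp_norm M p r f = (SUP \<nu>\<in>\<Gamma>. wLp_norm \<nu> p 1 (T f \<nu>)))"
proof (intro exI[of _ "weight_measures M r"] exI[of _ "weight_embedding M p r"] conjI allI impI ballI)
  fix \<nu> assume "\<nu> \<in> weight_measures M r"
  then show "sets \<nu> = sets M"
    by (elim weight_measuresE[where p = p]) simp
next
  fix f \<nu> assume "weak_Lp M p f" "\<nu> \<in> weight_measures M r"
  then show "weak_Lp \<nu> p (weight_embedding M p r f \<nu>)"
    by (elim weight_measuresE[where p = p]) (simp add: weak_Lp_weight_measure[OF assms])
next
  fix f g :: "'a \<Rightarrow> real" and \<nu> assume "AE x in M. f x = g x" "\<nu> \<in> weight_measures M r"
  then show "AE x in \<nu>. weight_embedding M p r f \<nu> x = weight_embedding M p r g \<nu> x"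
    by (elim weight_measuresE[where p = p]) (auto simp: admissible_weight_def intro: AE_weight_measure elim: AE_mp)
next
  fix f g :: "'a \<Rightarrow> real" and a b \<nu>
  show "AE x in \<nu>. weight_embedding M p r (\<lambda>y. a * f y + b * g y) \<nu> x
      = a * weight_embedding M p r f \<nu> x + b * weight_embedding M p r g \<nu> x"
    by (simp add: weight_embedding_def algebra_simps)
next
  fix f :: "'a \<Rightarrow> real" and \<nu>
  show "AE x in \<nu>. weight_embedding M p r (\<lambda>y. \<bar>f y\<bar>) \<nu> x = \<bar>weight_embedding M p r f \<nu> x\<bar>"
    by (simp add: weight_embedding_def abs_mult weight_factor_nonneg[OF assms])
next
  fix f assume "weak_Lp M p f"
  then show "wLp_norm M p r f = (SUP \<nu>\<in>weight_measures M r. wLp_norm \<nu> p 1 (weight_embedding M p r f \<nu>))"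
    by (intro wLp_norm_eq_SUP_weight_embedding[OF assms]) (simp add: weak_Lp_def)
qed

end
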